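(* Define $\theta:\mathbb R\to\mathbb R$ by $\theta(x)=e^{-1/|x|}$ for $x\neq 0$ and $\theta(0)=0$. Let $q(x)=x+x^2$ and $p(x)=q(x)+\theta(x)=x+x^2+\theta(x)$. These are $C^\infty$ functions with $p(0)=q(0)=0$ and $p'(0)=q'(0)=1$, hence invertible near $0$; let $f=p^{-1}$ and $g=q^{-1}$ be their local inverses near $0$ (so $f,g$ are $C^\infty$, $f(0)=g(0)=0$, $f'(0)=g'(0)=1$, and their graphs do not coincide). Then $$\lim_{x\to 0^+}\frac{x - f^{-1}(g(x))}{g^{-1}(x)-f^{-1}(x)} = \lim_{x\to 0^+}\frac{x-p(g(x))}{q(x)-p(x)} = e^{-1}\neq 1.$$
   Context: Geometrically, with points $B=(x,g(x))$, $C=(f^{-1}(g(x)),g(x))$, $D=(g^{-1}(x),x)$, $E=(f^{-1}(x),x)$, the quotient above is the ratio of the (signed) lengths $|BC|/|ED|$; the result shows this ratio need not tend to $1$ when $f,g$ are merely $C^\infty$ rather than analytic. *)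

theory Defs
  imports "HOL-Analysis.Analysis"
begin

definition theta :: "real \<Rightarrow> real" where
  "theta x = (if x = 0 then 0 else exp (- 1 / \<bar>x\<bar>))"

definition qfun :: "real \<Rightarrow> real" where
  "qfun x = x + x\<^sup>2"

definition pfun :: "real \<Rightarrow> real" where
  "pfun x = qfun x + theta x"

definition local_inverse_at0 :: "(real \<Rightarrow> real) \<Rightarrow> (real \<Rightarrow> real) \<Rightarrow> bool" where
  "local_inverse_at0 h F \<longleftrightarrow> h 0 = 0 \<and> isCont h 0 \<and>
     (\<exists>e>0. \<forall>y. \<bar>y\<bar> < e \<longrightarrow> F (h y) = y \<and> h (F y) = y)"

end

theory Submission
  imports Defs
begin

text \<open>Put \<open>y = g x\<close>, so that \<open>x = q y = y + y\<^sup>2\<close>. Since \<open>p = q + \<theta>\<close>, the numerator is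
  \<open>q y - p y = -\<theta> y\<close> and the denominator is \<open>-\<theta> x\<close>, so the quotient equals
  \<open>exp (1/y - 1/(y + y\<^sup>2)) = exp (-1/(1 + y))\<close>, which tends to \<open>exp (-1)\<close> as \<open>y \<rightarrow> 0\<close>.
  Because \<open>\<theta>\<close> is flat, the merely quadratic shift \<open>q y - y\<close> of its argument
  changes its exponent \<open>-1/y\<close> by an amount of order one.\<close>

lemma theta_pos: "x > 0 \<Longrightarrow> theta x = exp (- 1 / x)"
  by (simp add: theta_def)

lemma qfun_minus_pfun: "qfun x - pfun x = - theta x"
  by (simp add: pfun_def)

lemma qfun_eq_mult: "qfun y = y * (1 + y)"
  by (simp add: qfun_def power2_eq_square algebra_simps)

lemma qfun_pos: "y > 0 \<Longrightarrow> qfun y > 0"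
  by (simp add: qfun_def add_pos_nonneg)

lemma pos_if_qfun_pos:
  assumes "\<bar>y\<bar> < 1" and "qfun y > 0"
  shows "y > 0"
proof -
  have "1 + y > 0" using assms(1) by linarith
  then show ?thesis using assms(2) by (simp add: qfun_eq_mult zero_less_mult_iff)
qed

lemma theta_ratio_qfun:
  assumes "y > 0"
  shows "theta y / theta (qfun y) = exp (- 1 / (1 + y))"
proof -
  have "theta y / theta (qfun y) = exp (- 1 / y) / exp (- 1 / qfun y)"
    using assms qfun_pos[OF assms] by (simp add: theta_pos)
  also have "\<dots> = exp (- 1 / y - (- 1 / qfun y))"
    by (rule exp_diff[symmetric])
  also have "- 1 / y - (- 1 / qfun y) = - 1 / (1 + y)"
    using assms unfolding qfun_eq_mult by (simp add: divide_simps)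
  finally show ?thesis .
qed

lemma quotient_at_qfun:
  assumes "y > 0"
  shows "(qfun y - pfun y) / (qfun (qfun y) - pfun (qfun y)) = exp (- 1 / (1 + y))"
  using theta_ratio_qfun[OF assms] by (simp only: qfun_minus_pfun minus_divide_divide)

lemma local_inverse_at0_tendsto:
  "local_inverse_at0 h F \<Longrightarrow> (h \<longlongrightarrow> 0) (at 0)"
  unfolding local_inverse_at0_def by (metis continuous_at tendsto_at_iff_tendsto_nhds)

lemma local_inverse_at0_eventually_inverse:
  assumes "local_inverse_at0 h F"
  shows "\<forall>\<^sub>F y in at 0. F (h y) = y"
proof -
  from assms obtain e where "e > 0" and inv: "\<And>y. \<bar>y\<bar> < e \<Longrightarrow> F (h y) = y"
    unfolding local_inverse_at0_def by blast
  then show ?thesis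
    unfolding eventually_at by (metis dist_real_def diff_zero)
qed

theorem mainTheorem2:
  fixes f g :: "real \<Rightarrow> real"
  assumes "local_inverse_at0 f pfun" and "local_inverse_at0 g qfun"
  shows "((\<lambda>x. (x - pfun (g x)) / (qfun x - pfun x)) \<longlongrightarrow> exp (- 1)) (at_right 0) \<and>
         exp (- 1) \<noteq> (1::real)"
proof
  have g_lim: "(g \<longlongrightarrow> 0) (at_right 0)"
    using local_inverse_at0_tendsto[OF assms(2)] filterlim_at_split by blast
  have "\<forall>\<^sub>F x in at_right 0. qfun (g x) = x"
    using local_inverse_at0_eventually_inverse[OF assms(2)] eventually_at_split by blast
  moreover have "\<forall>\<^sub>F x in at_right 0. \<bar>g x\<bar> < 1"
    using order_tendstoD(2)[OF tendsto_rabs[OF g_lim], of 1] by simp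
  ultimately have "\<forall>\<^sub>F x in at_right 0. qfun (g x) = x \<and> \<bar>g x\<bar> < 1 \<and> x > (0::real)"
    using eventually_at_right_less by eventually_elim auto
  then have "\<forall>\<^sub>F x in at_right 0.
      exp (- 1 / (1 + g x)) = (x - pfun (g x)) / (qfun x - pfun x)"
    by eventually_elim (metis quotient_at_qfun pos_if_qfun_pos)
  moreover have "((\<lambda>x. exp (- 1 / (1 + g x))) \<longlongrightarrow> exp (- 1 / (1 + 0))) (at_right 0)"
    by (intro tendsto_intros g_lim) auto
  ultimately show "((\<lambda>x. (x - pfun (g x)) / (qfun x - pfun x)) \<longlongrightarrow> exp (- 1)) (at_right 0)"
    by (simp add: tendsto_cong)
  show "exp (- 1) \<noteq> (1::real)" by simp
qed

end
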